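(* For every $\lambda\in\mathbb C^n$, the extended Cherednik kernel $G(\lambda,\cdot)$ is the unique holomorphic function $f$ on $\mathbb R^n+iV$ satisfying $D_\xi f=\langle\lambda,\xi\rangle f$ for all $\xi\in\mathbb R^n$ and $f(0)=1$.
   Context: Fix $k\ge0$. $\langle z,w\rangle=\sum z_iw_i$, $\underline1=(1,\dots,1)$, $s_{ij}$ the transposition of coordinates $i,j$. $\mathbb R^n_0=\{x\in\mathbb R^n:\sum x_i=0\}$, $\mathbb C^n_0=\mathbb R^n_0+i\mathbb R^n_0$, $\pi(z)=z-\frac1n\langle z,\underline1\rangle\underline1$ (orthogonal projection onto $\mathbb R^n_0$, extended $\mathbb C$-linearly), $\Omega=\{x\in\mathbb R^n_0:|x_i-x_j|<\pi\ \forall i<j\}$, $V=\Omega+\mathbb R\underline1$. Let $\rho=-\frac k2(n-1,n-3,\dots,-n+1)$. For $\xi\in\mathbb R^n$ the trigonometric Cherednik operator (acting on holomorphic functions on $\mathcal S_n$-invariant domains, $\partial_\xi$ complex directional derivative) is $D_\xi f(x)=\partial_\xi f(x)-\langle\rho,\xi\rangle f(x)+k\sum_{1\le i<j\le n}(\xi_j-\xi_i)\frac{f(x)-f(s_{ij}x)}{1-e^{-(x_j-x_i)}}$. By results of Opdam and Krötz–Opdam there is a unique function $G_0$, holomorphic on $\mathbb C^n_0\times(\mathbb R^n_0+i\Omega)$, such that for every $\lambda\in\mathbb C^n_0$: $D_\xi G_0(\lambda,\cdot)=\langle\lambda,\xi\rangle G_0(\lambda,\cdot)$ for all $\xi\in\mathbb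 R^n_0$ and $G_0(\lambda,0)=1$. The extended Cherednik kernel is $G(\lambda,z):=e^{\frac1n\langle z,\underline1\rangle\langle\lambda,\underline1\rangle}G_0(\pi(\lambda),\pi(z))$ for $\lambda\in\mathbb C^n$, $z\in\mathbb R^n+iV$. *)

theory Defs
  imports "HOL-Analysis.Analysis"
begin

text \<open>Coordinates are indexed by a finite linearly ordered type 'n, so n = CARD('n).
  The order on 'n fixes the labelling 1..n of the coordinates (needed for rho and i<j).\<close>

definition cidx :: "'n::{finite,linorder} \<Rightarrow> nat" where
  "cidx i = card {j. j < i}"   \<comment> \<open>0-based position of coordinate i\<close>

definition cinner :: "complex^'n::finite \<Rightarrow> complex^'n \<Rightarrow> complex" where
  "cinner z w = (\<Sum>i\<in>UNIV. z$i * w$i)"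

definition one_vec :: "complex^'n::finite" where
  "one_vec = (\<chi> i. 1)"

definition cvec :: "real^'n::finite \<Rightarrow> complex^'n" where
  "cvec x = (\<chi> i. complex_of_real (x$i))"

definition im_vec :: "complex^'n::finite \<Rightarrow> real^'n" where
  "im_vec z = (\<chi> i. Im (z$i))"

definition re_vec :: "complex^'n::finite \<Rightarrow> real^'n" where
  "re_vec z = (\<chi> i. Re (z$i))"

definition swapc :: "'n::finite \<Rightarrow> 'n \<Rightarrow> complex^'n \<Rightarrow> complex^'n" where
  "swapc i j z = (\<chi> l. if l = i then z$j else if l = j then z$i else z$l)"

definition R0 :: "(real^'n::finite) set" where
  "R0 = {x. (\<Sum>i\<in>UNIV. x$i) = 0}"

definition C0 :: "(complex^'n::finite) set" where
  "C0 = {z. (\<Sum>i\<in>UNIV. z$i) = 0}"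

definition proj0 :: "complex^'n::finite \<Rightarrow> complex^'n" where
  "proj0 z = z - (cinner z one_vec / of_nat CARD('n)) *s one_vec"

definition Omega :: "(real^'n::finite) set" where
  "Omega = {x \<in> R0. \<forall>i j. \<bar>x$i - x$j\<bar> < pi}"

definition Vset :: "(real^'n::finite) set" where
  "Vset = {w + t *\<^sub>R (\<chi> i. 1) | w t. w \<in> Omega}"

definition T0 :: "(complex^'n::finite) set" where
  "T0 = {z. re_vec z \<in> R0 \<and> im_vec z \<in> Omega}"

definition Tdom :: "(complex^'n::finite) set" where
  "Tdom = {z. im_vec z \<in> Vset}"

definition rho :: "real \<Rightarrow> real^'n::{finite,linorder}" where
  "rho k = (\<chi> i. -(k/2) * (real CARD('n) - 1 - 2 * real (cidx i)))"

text \<open>For open S this is usual holomorphy; for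
  S relatively open in the complex subspace C^n_0 it is holomorphy on that subspace.\<close>
definition holo_on :: "(complex^'n::finite) set \<Rightarrow> (complex^'n \<Rightarrow> complex) \<Rightarrow> bool" where
  "holo_on S f \<longleftrightarrow> (\<forall>z\<in>S. \<exists>L. (f has_derivative L) (at z within S) \<and>
       (\<forall>c v. L (c *s v) = c * L v))"

definition holo2_on :: "((complex^'n::finite) \<times> (complex^'n)) set
    \<Rightarrow> ((complex^'n) \<times> (complex^'n) \<Rightarrow> complex) \<Rightarrow> bool" where
  "holo2_on S f \<longleftrightarrow> (\<forall>p\<in>S. \<exists>L. (f has_derivative L) (at p within S) \<and>
       (\<forall>c v w. L (c *s v, c *s w) = c * L (v, w)))"

definition regular_pt :: "complex^'n::{finite,linorder} \<Rightarrow> bool" where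
  "regular_pt x \<longleftrightarrow> (\<forall>i j. i < j \<longrightarrow> 1 - exp (-(x$j - x$i)) \<noteq> 0)"

definition cherD :: "real \<Rightarrow> (real,'n::{finite,linorder}) vec \<Rightarrow> ((complex,'n) vec \<Rightarrow> complex)
    \<Rightarrow> (complex,'n) vec \<Rightarrow> complex" where
  "cherD k \<xi> f x =
     deriv (\<lambda>t. f (x + t *s cvec \<xi>)) 0
     - complex_of_real (rho k \<bullet> \<xi>) * f x
     + complex_of_real k * (\<Sum>(i,j)\<in>{(i,j). i < j}.
          complex_of_real (\<xi>$j - \<xi>$i) * (f x - f (swapc i j x)) / (1 - exp (-(x$j - x$i))))"

definition Gext :: "(complex^'n::finite \<Rightarrow> complex^'n \<Rightarrow> complex)
    \<Rightarrow> complex^'n \<Rightarrow> complex^'n \<Rightarrow> complex" where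
  "Gext G0 lam z = exp (cinner z one_vec * cinner lam one_vec / of_nat CARD('n))
                  * G0 (proj0 lam) (proj0 z)"

definition G0_props :: "real \<Rightarrow> ((complex,'n::{finite,linorder}) vec \<Rightarrow> (complex,'n) vec \<Rightarrow> complex) \<Rightarrow> bool" where
  "G0_props k H \<longleftrightarrow>
     holo2_on (C0 \<times> T0) (\<lambda>(l,z). H l z) \<and>
     (\<forall>l\<in>C0. (\<forall>\<xi>\<in>R0. \<forall>x\<in>T0. regular_pt x \<longrightarrow> cherD k \<xi> (H l) x = cinner l (cvec \<xi>) * H l x)
              \<and> H l 0 = 1)"

end

theory Submission
  imports Defs
begin

text \<open>
  Existence is a change of variables.  Along the diagonal direction 1 the difference terms of
  D_xi vanish and rho is orthogonal to 1, so on exp ((1/n) <z,1> <lambda,1>) G_0 (pi lambda, pi z)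
  the operator D_xi acts as D_(pi xi) on G_0 plus multiplication by (1/n) <xi,1> <lambda,1>, and the
  two eigenvalues add up to <lambda,xi>.

  Uniqueness is an energy estimate.  The difference u of two solutions satisfies the Euler identity
  du_x(x) = <lambda + rho, x> u(x) - k sum_(i<j) (x_j - x_i) (u(x) - u(s_ij x)) / (1 - exp (x_i - x_j)).
  For y with distinct coordinates put N(t) = sum over v in the S_n-orbit of y of |u(t v)|^2.  Pairing
  v with s_ij v, each difference term contributes Re (w coth (w/2)) |u(x) - u(s_ij x)|^2, which is
  nonnegative because |Im w| < pi on the tube, plus a term bounded by |w| times the energy.  As
  k >= 0 this gives N' <= C N, so N(0) = 0 forces N(1) = 0 by Gronwall's lemma, and continuity
  extends u = 0 from the dense set of points with distinct coordinates.
\<close>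

section \<open>The tube domain and the projection to the hyperplane\<close>

lemma mem_Tdom_iff:
  fixes z :: "complex^'n::finite"
  shows "z \<in> Tdom \<longleftrightarrow> (\<forall>i j. \<bar>Im (z$i) - Im (z$j)\<bar> < pi)"
proof
  assume "z \<in> Tdom"
  then obtain w t where "im_vec z = w + t *\<^sub>R (\<chi> i. 1)" "w \<in> Omega"
    unfolding Tdom_def Vset_def by auto
  then show "\<forall>i j. \<bar>Im (z$i) - Im (z$j)\<bar> < pi"
    unfolding Omega_def im_vec_def by (auto simp: vec_eq_iff)
next
  assume H: "\<forall>i j. \<bar>Im (z$i) - Im (z$j)\<bar> < pi"
  define t where "t = (\<Sum>i\<in>UNIV. Im (z$i)) / real CARD('n)"
  define w where "w = im_vec z - t *\<^sub>R (\<chi> i. 1)"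
  have "w \<in> Omega"
    using H unfolding Omega_def R0_def w_def t_def im_vec_def by (simp add: sum_subtractf)
  moreover have "im_vec z = w + t *\<^sub>R (\<chi> i. 1)" unfolding w_def by simp
  ultimately show "z \<in> Tdom" unfolding Tdom_def Vset_def by blast
qed

lemma open_Tdom: "open (Tdom :: (complex^'n::finite) set)"
proof -
  have "(Tdom :: (complex^'n) set) = (\<Inter>i. \<Inter>j. {z. \<bar>Im (z$i) - Im (z$j)\<bar> < pi})"
    by (auto simp: mem_Tdom_iff)
  also have "open \<dots>"
    by (intro open_INT ballI open_Collect_less continuous_intros) auto
  finally show ?thesis .
qed

lemma T0_eq_C0_Int_Tdom: "T0 = C0 \<inter> Tdom"
  by (auto simp: T0_def C0_def mem_Tdom_iff Omega_def R0_def re_vec_def im_vec_def complex_eq_iff)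

lemma scaleC_in_Tdom:
  assumes "z \<in> Tdom" "0 \<le> t" "t \<le> 1"
  shows "complex_of_real t *s z \<in> Tdom"
proof -
  have "\<bar>t * Im (z$i) - t * Im (z$j)\<bar> \<le> \<bar>Im (z$i) - Im (z$j)\<bar>" for i j
    using assms(2,3) by (simp add: right_diff_distrib[symmetric] abs_mult mult_left_le_one_le)
  with assms(1) show ?thesis
    unfolding mem_Tdom_iff by (simp, meson le_less_trans)
qed

lemma swapc_nth: "swapc i j z $ l = z $ Transposition.transpose i j l"
  by (simp add: swapc_def transpose_def)

lemma swapc_swapc [simp]: "swapc i j (swapc i j z) = z"
  by (simp add: vec_eq_iff swapc_nth)

lemma sum_UNIV_transpose: "(\<Sum>l\<in>UNIV. f (Transposition.transpose i j l)) = (\<Sum>l\<in>UNIV. f l)"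
  using sum.permute[OF permutes_swap_id[of i UNIV j], of f] by (simp add: o_def)

lemma one_vec_nth [simp]: "(one_vec :: complex^'n::finite) $ i = 1"
  by (simp add: one_vec_def)

lemma cinner_one_vec: "cinner (z :: complex^'n::finite) one_vec = (\<Sum>i\<in>UNIV. z$i)"
  by (simp add: cinner_def)

lemma proj0_nth: "proj0 z $ l = z $ l - (\<Sum>i\<in>UNIV. z$i) / of_nat CARD('n)"
  for z :: "complex^'n::finite"
  by (simp add: proj0_def cinner_one_vec)

lemma proj0_in_C0: "proj0 (z :: complex^'n::finite) \<in> C0"
  by (simp add: C0_def proj0_nth sum_subtractf)

lemma proj0_in_T0: "z \<in> Tdom \<Longrightarrow> proj0 z \<in> T0"
  by (simp add: T0_eq_C0_Int_Tdom proj0_in_C0 mem_Tdom_iff proj0_nth)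

lemma proj0_add: "proj0 (z + w) = proj0 z + proj0 w"
  by (simp add: vec_eq_iff proj0_nth sum.distrib add_divide_distrib)

lemma proj0_scaleC: "proj0 (c *s z) = c *s proj0 z"
  by (simp add: vec_eq_iff proj0_nth sum_distrib_left[symmetric] algebra_simps)

lemma proj0_swapc: "proj0 (swapc i j z) = swapc i j (proj0 z)"
  by (simp add: vec_eq_iff proj0_nth swapc_nth sum_UNIV_transpose[where f="\<lambda>l. z$l"])

lemma scaleR_eq_scaleC: "r *\<^sub>R (z :: complex^'n::finite) = complex_of_real r *s z"
  by (simp add: vec_eq_iff scaleR_conv_of_real[where 'a=complex])

lemma linear_proj0: "linear proj0"
  by (rule linearI) (simp_all add: proj0_add scaleR_eq_scaleC proj0_scaleC)

lemma regular_pt_proj0: "regular_pt (proj0 x) = regular_pt x"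
  by (simp add: regular_pt_def proj0_nth)

definition diag_pairing :: "complex^'n::finite \<Rightarrow> complex^'n \<Rightarrow> complex" where
  "diag_pairing l z = cinner z one_vec * (cinner l one_vec / of_nat CARD('n))"

lemma cinner_eq_proj0_plus_diag_pairing:
  fixes l w :: "complex^'n::finite"
  shows "cinner l w = cinner (proj0 l) (proj0 w) + diag_pairing l w"
proof -
  have "cinner (proj0 l) v = cinner l v - (\<Sum>i\<in>UNIV. l$i) / of_nat CARD('n) * (\<Sum>i\<in>UNIV. v$i)" for v
    by (simp add: cinner_def proj0_nth left_diff_distrib sum_subtractf sum_distrib_left)
  then have "cinner (proj0 l) (proj0 w) = cinner l (proj0 w)"
    using proj0_in_C0[of w] by (simp add: C0_def)
  also have "\<dots> = cinner l w - diag_pairing l w"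
    by (simp add: cinner_def proj0_nth diag_pairing_def cinner_one_vec right_diff_distrib sum_subtractf
        sum_distrib_left sum_distrib_right sum_divide_distrib mult.commute)
  finally show ?thesis by simp
qed

lemma diag_pairing_scaleC: "diag_pairing l (c *s v) = c * diag_pairing l v"
  by (simp add: diag_pairing_def cinner_one_vec sum_distrib_left[symmetric] algebra_simps)

lemma linear_diag_pairing: "linear (diag_pairing l)"
  by (rule linearI) (simp_all add: scaleR_eq_scaleC diag_pairing_scaleC scaleR_conv_of_real,
      simp add: diag_pairing_def cinner_one_vec sum.distrib algebra_simps)

lemma diag_pairing_swapc: "diag_pairing l (swapc i j x) = diag_pairing l x"
  by (simp add: diag_pairing_def cinner_one_vec swapc_nth sum_UNIV_transpose[where f="\<lambda>l. x$l"])

lemma Gext_eq: "Gext G0 lam z = exp (diag_pairing lam z) * G0 (proj0 lam) (proj0 z)"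
  by (simp add: Gext_def diag_pairing_def)

section \<open>Holomorphy\<close>

lemma holo_on_open_has_derivative:
  assumes "holo_on S f" "open S" "x \<in> S"
  shows "\<exists>L. (f has_derivative L) (at x) \<and> (\<forall>c v. L (c *s v) = c * L v)"
  using assms at_within_open[OF assms(3,2)] unfolding holo_on_def by metis

lemma linear_scaleC_left: "linear (\<lambda>t::complex. t *s (d :: complex^'n::finite))"
  by (rule linearI) (simp_all add: vec_eq_iff algebra_simps scaleR_conv_of_real[where 'a=complex])

lemma has_field_derivative_line:
  fixes f :: "complex^'n::finite \<Rightarrow> complex"
  assumes "(f has_derivative L) (at (x + t *s d))" and "\<And>c v. L (c *s v) = c * L v"
  shows "((\<lambda>s. f (x + s *s d)) has_field_derivative L d) (at t)"
proof -
  have "bounded_linear (\<lambda>s::complex. s *s d)"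
    using linear_scaleC_left linear_conv_bounded_linear by blast
  then have "((\<lambda>s. x + s *s d) has_derivative (\<lambda>s. s *s d)) (at t)"
    using has_derivative_add[OF has_derivative_const bounded_linear.has_derivative[OF _ has_derivative_ident]]
    by fastforce
  from has_derivative_compose[OF this assms(1)]
  have "((\<lambda>s. f (x + s *s d)) has_derivative (\<lambda>s. L (s *s d))) (at t)" by (simp add: o_def)
  moreover have "(\<lambda>s. L (s *s d)) = (\<lambda>s. L d * s)"
    by (simp add: assms(2) mult.commute)
  ultimately show ?thesis by (simp add: has_field_derivative_def)
qed

lemma deriv_line:
  fixes f :: "complex^'n::finite \<Rightarrow> complex"
  assumes "(f has_derivative L) (at x)" and "\<And>c v. L (c *s v) = c * L v"
  shows "deriv (\<lambda>s. f (x + s *s d)) 0 = L d"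
  using has_field_derivative_line[of f L x 0 d] assms by (simp add: DERIV_imp_deriv)

lemma holo_on_mult:
  assumes f: "holo_on S f" and g: "holo_on S g"
  shows "holo_on S (\<lambda>z. f z * g z)"
  unfolding holo_on_def
proof
  fix z assume "z \<in> S"
  with f g obtain Lf Lg where
    Lf: "(f has_derivative Lf) (at z within S)" "\<And>c v. Lf (c *s v) = c * Lf v" and
    Lg: "(g has_derivative Lg) (at z within S)" "\<And>c v. Lg (c *s v) = c * Lg v"
    unfolding holo_on_def by blast
  have "((\<lambda>z. f z * g z) has_derivative (\<lambda>v. f z * Lg v + Lf v * g z)) (at z within S)"
    by (rule has_derivative_mult[OF Lf(1) Lg(1)])
  moreover have "f z * Lg (c *s v) + Lf (c *s v) * g z = c * (f z * Lg v + Lf v * g z)" for c v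
    by (simp add: Lf(2) Lg(2) algebra_simps)
  ultimately show "\<exists>L. ((\<lambda>z. f z * g z) has_derivative L) (at z within S) \<and> (\<forall>c v. L (c *s v) = c * L v)"
    by blast
qed

lemma holo_on_diff:
  assumes f: "holo_on S f" and g: "holo_on S g"
  shows "holo_on S (\<lambda>z. f z - g z)"
  unfolding holo_on_def
proof
  fix z assume "z \<in> S"
  with f g obtain Lf Lg where
    Lf: "(f has_derivative Lf) (at z within S)" "\<And>c v. Lf (c *s v) = c * Lf v" and
    Lg: "(g has_derivative Lg) (at z within S)" "\<And>c v. Lg (c *s v) = c * Lg v"
    unfolding holo_on_def by blast
  have "((\<lambda>z. f z - g z) has_derivative (\<lambda>v. Lf v - Lg v)) (at z within S)"
    by (rule has_derivative_diff[OF Lf(1) Lg(1)])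
  moreover have "Lf (c *s v) - Lg (c *s v) = c * (Lf v - Lg v)" for c v
    by (simp add: Lf(2) Lg(2) algebra_simps)
  ultimately show "\<exists>L. ((\<lambda>z. f z - g z) has_derivative L) (at z within S) \<and> (\<forall>c v. L (c *s v) = c * L v)"
    by blast
qed

lemma holo_on_exp_linear:
  fixes \<phi> :: "complex^'n::finite \<Rightarrow> complex"
  assumes "linear \<phi>" and hom: "\<And>c v. \<phi> (c *s v) = c * \<phi> v"
  shows "holo_on S (\<lambda>z. exp (\<phi> z))"
  unfolding holo_on_def
proof
  fix z
  have "(\<phi> has_derivative \<phi>) (at z within S)"
    using assms(1) by (simp add: linear_conv_bounded_linear bounded_linear_imp_has_derivative)
  moreover have "(exp has_derivative (*) (exp (\<phi> z))) (at (\<phi> z))"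
    using DERIV_exp[of "\<phi> z"] by (simp add: has_field_derivative_def)
  ultimately have "((\<lambda>z. exp (\<phi> z)) has_derivative (\<lambda>v. exp (\<phi> z) * \<phi> v)) (at z within S)"
    using has_derivative_compose[of \<phi> \<phi> z S exp] by simp
  then show "\<exists>L. ((\<lambda>z. exp (\<phi> z)) has_derivative L) (at z within S) \<and> (\<forall>c v. L (c *s v) = c * L v)"
    using hom by (auto simp: algebra_simps)
qed

lemma holo_on_compose_proj0:
  assumes F: "holo2_on (C0 \<times> T0) F" and l: "l \<in> C0" and S: "proj0 ` S \<subseteq> T0"
  shows "holo_on S (\<lambda>z. F (l, proj0 z))"
  unfolding holo_on_def
proof
  fix x assume x: "x \<in> S"
  with F l S obtain L where
    L: "(F has_derivative L) (at (l, proj0 x) within C0 \<times> T0)" "\<And>c v w. L (c *s v, c *s w) = c * L (v, w)"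
    unfolding holo2_on_def by blast
  have "bounded_linear proj0"
    using linear_proj0 linear_conv_bounded_linear by blast
  then have P: "((\<lambda>z. (l, proj0 z)) has_derivative (\<lambda>v. (0, proj0 v))) (at x within S)"
    by (rule has_derivative_Pair[OF has_derivative_const bounded_linear.has_derivative[OF _ has_derivative_ident]])
  have "(F has_derivative L) (at (l, proj0 x) within (\<lambda>z. (l, proj0 z)) ` S)"
    by (rule has_derivative_subset[OF L(1)]) (use l S in auto)
  from diff_chain_within[OF P this] have "((\<lambda>z. F (l, proj0 z)) has_derivative (\<lambda>v. L (0, proj0 v))) (at x within S)"
    by (simp add: o_def)
  moreover have "L (0, proj0 (c *s v)) = c * L (0, proj0 v)" for c v
    using L(2)[of c 0 "proj0 v"] by (simp add: proj0_scaleC)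
  ultimately show "\<exists>L. ((\<lambda>z. F (l, proj0 z)) has_derivative L) (at x within S) \<and> (\<forall>c v. L (c *s v) = c * L v)"
    by blast
qed

lemma holo_on_G0_proj0:
  assumes "holo2_on (C0 \<times> T0) (\<lambda>(l,z). G0 l z)" "l \<in> C0"
  shows "holo_on Tdom (\<lambda>z. G0 l (proj0 z))"
proof -
  have "proj0 ` Tdom \<subseteq> T0"
    using proj0_in_T0 by blast
  from holo_on_compose_proj0[OF assms this] show ?thesis by simp
qed

lemma holo_on_Gext:
  assumes "holo2_on (C0 \<times> T0) (\<lambda>(l,z). G0 l z)"
  shows "holo_on Tdom (Gext G0 lam)"
  unfolding Gext_eq[abs_def]
  by (intro holo_on_mult holo_on_exp_linear linear_diag_pairing diag_pairing_scaleC
      holo_on_G0_proj0[OF assms proj0_in_C0])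

section \<open>The extended kernel is an eigenfunction\<close>

lemma cidx_less: "i < j \<Longrightarrow> cidx i < cidx (j :: 'n::{finite,linorder})"
  unfolding cidx_def by (rule psubset_card_mono) auto

lemma inj_cidx: "inj (cidx :: 'n::{finite,linorder} \<Rightarrow> nat)"
  by (metis cidx_less injI less_irrefl neqE)

lemma range_cidx: "range (cidx :: 'n::{finite,linorder} \<Rightarrow> nat) = {..<CARD('n)}"
proof -
  have "range (cidx :: 'n \<Rightarrow> nat) \<subseteq> {..<CARD('n)}"
    unfolding cidx_def by (auto intro!: psubset_card_mono)
  moreover have "card (range (cidx :: 'n \<Rightarrow> nat)) = card {..<CARD('n)}"
    using card_image[OF inj_cidx] by simp
  ultimately show ?thesis by (intro card_subset_eq) auto
qed

lemma sum_rho_eq_0: "(\<Sum>i\<in>UNIV. rho k $ (i :: 'n::{finite,linorder})) = 0"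
proof -
  have gauss: "2 * (\<Sum>m<N. real m) = real N * (real N - 1)" for N
    by (induction N) (auto simp: algebra_simps)
  have "(\<Sum>i\<in>UNIV. real CARD('n) - 1 - 2 * real (cidx (i :: 'n)))
      = (\<Sum>m<CARD('n). real CARD('n) - 1 - 2 * real m)"
    using sum.reindex[OF inj_cidx[where 'n='n], of "\<lambda>m. real CARD('n) - 1 - 2 * real m"] by (simp add: range_cidx)
  also have "\<dots> = 0"
    using gauss[of "CARD('n)"] by (simp add: sum_subtractf sum_distrib_left[symmetric])
  finally have "(\<Sum>i\<in>UNIV. real CARD('n) - 1 - 2 * real (cidx (i :: 'n))) = 0" .
  moreover have "(\<Sum>i\<in>UNIV. rho k $ (i :: 'n))
      = -(k/2) * (\<Sum>i\<in>UNIV. real CARD('n) - 1 - 2 * real (cidx (i :: 'n)))"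
    by (simp only: rho_def vec_lambda_beta sum_distrib_left)
  ultimately show ?thesis by simp
qed

definition rproj0 :: "real^'n::finite \<Rightarrow> real^'n" where
  "rproj0 \<xi> = \<xi> - ((\<Sum>i\<in>UNIV. \<xi>$i) / real CARD('n)) *\<^sub>R (\<chi> i. 1)"

lemma cvec_rproj0: "cvec (rproj0 \<xi>) = proj0 (cvec \<xi>)"
  by (simp add: vec_eq_iff cvec_def rproj0_def proj0_nth)

lemma rproj0_in_R0: "rproj0 \<xi> \<in> R0"
  by (simp add: R0_def rproj0_def sum_subtractf)

lemma rproj0_nth_diff: "rproj0 \<xi> $ j - rproj0 \<xi> $ i = \<xi>$j - \<xi>$i"
  by (simp add: rproj0_def)

lemma rho_inner_rproj0: "rho k \<bullet> rproj0 \<xi> = rho k \<bullet> (\<xi> :: real^'n::{finite,linorder})"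
proof -
  have "(\<Sum>i\<in>UNIV. rho k $ (i :: 'n) * c) = 0" for c
    using sum_rho_eq_0[of k, where 'n='n] by (simp add: sum_distrib_right[symmetric])
  from this[of "(\<Sum>i\<in>UNIV. \<xi>$i) / real CARD('n)"] show ?thesis
    by (simp add: rproj0_def inner_vec_def right_diff_distrib sum_subtractf)
qed

lemma cherD_Gext:
  fixes G0 :: "(complex,'n::{finite,linorder}) vec \<Rightarrow> (complex,'n) vec \<Rightarrow> complex"
  assumes diff: "(\<lambda>t. G0 (proj0 lam) (proj0 x + t *s proj0 (cvec \<xi>))) field_differentiable (at 0)"
  shows "cherD k \<xi> (Gext G0 lam) x = exp (diag_pairing lam x)
           * (cherD k (rproj0 \<xi>) (G0 (proj0 lam)) (proj0 x) + diag_pairing lam (cvec \<xi>) * G0 (proj0 lam) (proj0 x))"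
proof -
  define h where "h = G0 (proj0 lam)"
  define e where "e = exp (diag_pairing lam x)"
  define y where "y = proj0 x"
  define d where "d = cvec \<xi>"
  define b where "b = diag_pairing lam d"
  obtain D where D: "((\<lambda>t. h (y + t *s proj0 d)) has_field_derivative D) (at 0)"
    using diff unfolding field_differentiable_def h_def y_def d_def by blast
  have line: "Gext G0 lam (x + t *s d) = exp (diag_pairing lam x + t * b) * h (y + t *s proj0 d)" for t
    by (simp add: Gext_eq h_def y_def b_def proj0_add proj0_scaleC diag_pairing_scaleC
        linear_add[OF linear_diag_pairing])
  have "((\<lambda>t. exp (diag_pairing lam x + t * b)) has_field_derivative e * b) (at 0)"
    by (auto intro!: derivative_eq_intros simp: e_def)
  from DERIV_mult[OF this D]
  have "((\<lambda>t. exp (diag_pairing lam x + t * b) * h (y + t *s proj0 d)) has_field_derivative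
          e * b * h y + e * D) (at 0)"
    by (simp add: e_def algebra_simps)
  then have deriv_eq: "deriv (\<lambda>t. Gext G0 lam (x + t *s d)) 0
      = e * (deriv (\<lambda>t. h (y + t *s proj0 d)) 0 + b * h y)"
    using D by (simp add: line DERIV_imp_deriv algebra_simps)
  have at_x: "Gext G0 lam x = e * h y" and at_swap: "Gext G0 lam (swapc i j x) = e * h (swapc i j y)" for i j
    by (simp_all add: Gext_eq e_def h_def y_def diag_pairing_swapc proj0_swapc)
  have y_diff: "y$j - y$i = x$j - x$i" for i j
    by (simp add: y_def proj0_nth)
  have sum_eq: "(\<Sum>(i,j)\<in>{(i,j). i < j}. complex_of_real (\<xi>$j - \<xi>$i)
        * (Gext G0 lam x - Gext G0 lam (swapc i j x)) / (1 - exp (-(x$j - x$i))))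
      = e * (\<Sum>(i,j)\<in>{(i,j). i < j}. complex_of_real (rproj0 \<xi>$j - rproj0 \<xi>$i)
        * (h y - h (swapc i j y)) / (1 - exp (-(y$j - y$i))))"
    unfolding sum_distrib_left y_diff rproj0_nth_diff
    by (intro sum.cong refl) (auto simp: at_x at_swap rproj0_nth_diff algebra_simps)
  show ?thesis
    unfolding cherD_def d_def[symmetric] deriv_eq sum_eq rho_inner_rproj0 cvec_rproj0 h_def[symmetric]
    by (simp add: at_x b_def e_def y_def algebra_simps)
qed

lemma cherD_Gext_eigen:
  fixes G0 :: "(complex,'n::{finite,linorder}) vec \<Rightarrow> (complex,'n) vec \<Rightarrow> complex"
  assumes G0: "G0_props k G0" and x: "x \<in> Tdom" "regular_pt x"
  shows "cherD k \<xi> (Gext G0 lam) x = cinner lam (cvec \<xi>) * Gext G0 lam x"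
proof -
  have "holo2_on (C0 \<times> T0) (\<lambda>(l,z). G0 l z)"
    using G0 by (simp add: G0_props_def)
  from holo_on_G0_proj0[OF this proj0_in_C0] obtain L where "((\<lambda>z. G0 (proj0 lam) (proj0 z)) has_derivative L) (at x)" "\<And>c v. L (c *s v) = c * L v"
    using holo_on_open_has_derivative[OF _ open_Tdom x(1)] by blast
  from has_field_derivative_line[of "\<lambda>z. G0 (proj0 lam) (proj0 z)" L x 0 "cvec \<xi>"] this
  have "(\<lambda>t. G0 (proj0 lam) (proj0 x + t *s proj0 (cvec \<xi>))) field_differentiable (at 0)"
    unfolding field_differentiable_def by (auto simp: proj0_add proj0_scaleC)
  moreover have "cherD k (rproj0 \<xi>) (G0 (proj0 lam)) (proj0 x)
      = cinner (proj0 lam) (cvec (rproj0 \<xi>)) * G0 (proj0 lam) (proj0 x)"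
    using G0 proj0_in_C0[of lam] proj0_in_T0[OF x(1)] x(2) rproj0_in_R0[of \<xi>]
    unfolding G0_props_def regular_pt_proj0[of x, symmetric] by blast
  ultimately show ?thesis
    using cinner_eq_proj0_plus_diag_pairing[of lam "cvec \<xi>"]
    by (simp add: cherD_Gext Gext_eq cvec_rproj0 algebra_simps)
qed

lemma cherD_diff:
  assumes "holo_on Tdom f" "holo_on Tdom g" "x \<in> Tdom"
  shows "cherD k \<xi> (\<lambda>z. f z - g z) x = cherD k \<xi> f x - cherD k \<xi> g x"
proof -
  obtain Lf Lg where
    "(f has_derivative Lf) (at x)" "\<And>c v. Lf (c *s v) = c * Lf v"
    "(g has_derivative Lg) (at x)" "\<And>c v. Lg (c *s v) = c * Lg v"
    using holo_on_open_has_derivative[OF _ open_Tdom assms(3)] assms(1,2) by metis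
  then have deriv_eq: "deriv (\<lambda>t. f (x + t *s d) - g (x + t *s d)) 0
      = deriv (\<lambda>t. f (x + t *s d)) 0 - deriv (\<lambda>t. g (x + t *s d)) 0" for d
    using has_field_derivative_line[of f Lf x 0 d] has_field_derivative_line[of g Lg x 0 d]
    by (simp add: DERIV_imp_deriv DERIV_diff)
  have "(c :: complex) * ((a - b) - (a' - b')) / q = c * (a - a') / q - c * (b - b') / q"
    for c a b a' b' q
  proof -
    have "(a - b) - (a' - b') = (a - a') - (b - b')" by simp
    then show ?thesis by (simp only: right_diff_distrib diff_divide_distrib)
  qed
  then have sum_eq: "(\<Sum>(i,j)\<in>{(i,j). i < j}. complex_of_real (\<xi>$j - \<xi>$i)
        * ((f x - g x) - (f (swapc i j x) - g (swapc i j x))) / (1 - exp (-(x$j - x$i))))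
      = (\<Sum>(i,j)\<in>{(i,j). i < j}. complex_of_real (\<xi>$j - \<xi>$i)
          * (f x - f (swapc i j x)) / (1 - exp (-(x$j - x$i))))
        - (\<Sum>(i,j)\<in>{(i,j). i < j}. complex_of_real (\<xi>$j - \<xi>$i)
          * (g x - g (swapc i j x)) / (1 - exp (-(x$j - x$i))))"
    unfolding sum_subtractf[symmetric] by (intro sum.cong refl) auto
  show ?thesis
    unfolding cherD_def deriv_eq sum_eq by (simp add: algebra_simps)
qed

section \<open>The Euler identity\<close>

definition cher_diff_term :: "((complex,'n::finite) vec \<Rightarrow> complex) \<Rightarrow> 'n \<Rightarrow> 'n \<Rightarrow> (complex,'n) vec \<Rightarrow> complex"
  where "cher_diff_term h i j x = (x$j - x$i) * (h x - h (swapc i j x)) / (1 - exp (-(x$j - x$i)))"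

definition cher_diff_sum :: "((complex,'n::{finite,linorder}) vec \<Rightarrow> complex) \<Rightarrow> (complex,'n) vec \<Rightarrow> complex"
  where "cher_diff_sum h x = (\<Sum>(i,j)\<in>{(i,j). i < j}. cher_diff_term h i j x)"

lemma cvec_re_im: "x = cvec (re_vec x) + \<i> *s cvec (im_vec x)"
  by (simp add: vec_eq_iff cvec_def re_vec_def im_vec_def complex_eq_iff)

lemma cinner_add_left: "cinner (a + b) x = cinner a x + cinner b x"
  by (simp add: cinner_def sum.distrib algebra_simps)

lemma cinner_add_scaleC_right: "cinner l (a + c *s b) = cinner l a + c * cinner l b"
  by (simp add: cinner_def sum.distrib sum_distrib_left algebra_simps)

lemma cinner_cvec_left: "cinner (cvec r) x = complex_of_real (r \<bullet> re_vec x) + \<i> * complex_of_real (r \<bullet> im_vec x)"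
proof -
  have "cinner (cvec r) x = (\<Sum>i\<in>UNIV. complex_of_real (r$i * Re (x$i)) + \<i> * complex_of_real (r$i * Im (x$i)))"
    unfolding cinner_def by (rule sum.cong) (auto simp: cvec_def complex_eq_iff)
  also have "\<dots> = complex_of_real (r \<bullet> re_vec x) + \<i> * complex_of_real (r \<bullet> im_vec x)"
    by (simp add: sum.distrib inner_vec_def re_vec_def im_vec_def sum_distrib_left)
  finally show ?thesis .
qed

text \<open>Only real directions \<open>\<xi>\<close> occur in \<open>cherD\<close>; the radial derivative \<open>L x\<close> is recovered from
  \<open>\<xi> = Re x\<close> and \<open>\<xi> = Im x\<close> by complex linearity of \<open>L\<close>.\<close>
lemma cherD_euler_identity:
  fixes h :: "(complex,'n::{finite,linorder}) vec \<Rightarrow> complex"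
  assumes hd: "(h has_derivative L) (at x)" and hom: "\<And>c v. L (c *s v) = c * L v"
    and eig: "\<And>\<xi>. cherD k \<xi> h x = cinner lam (cvec \<xi>) * h x"
  shows "L x = cinner (lam + cvec (rho k)) x * h x - k * cher_diff_sum h x"
proof -
  define S where "S \<xi> = (\<Sum>(i,j)\<in>{(i,j). i < j}.
    complex_of_real (\<xi>$j - \<xi>$i) * (h x - h (swapc i j x)) / (1 - exp (-(x$j - x$i))))" for \<xi> :: "(real,'n) vec"
  define \<xi>1 where "\<xi>1 = re_vec x"
  define \<xi>2 where "\<xi>2 = im_vec x"
  have x_eq: "x = cvec \<xi>1 + \<i> *s cvec \<xi>2"
    unfolding \<xi>1_def \<xi>2_def by (rule cvec_re_im)
  have cherD_eq: "cherD k \<xi> h x = L (cvec \<xi>) - complex_of_real (rho k \<bullet> \<xi>) * h x + k * S \<xi>" for \<xi>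
    unfolding cherD_def S_def deriv_line[OF hd hom] ..
  have L_x: "L x = L (cvec \<xi>1) + \<i> * L (cvec \<xi>2)"
    using has_derivative_linear[OF hd] by (subst x_eq) (simp add: linear_add hom)
  have rho_x: "cinner (cvec (rho k)) x = complex_of_real (rho k \<bullet> \<xi>1) + \<i> * complex_of_real (rho k \<bullet> \<xi>2)"
    unfolding \<xi>1_def \<xi>2_def by (rule cinner_cvec_left)
  have lam_x: "cinner lam x = cinner lam (cvec \<xi>1) + \<i> * cinner lam (cvec \<xi>2)"
    by (subst x_eq) (rule cinner_add_scaleC_right)
  have S_x: "S \<xi>1 + \<i> * S \<xi>2 = cher_diff_sum h x"
    unfolding S_def cher_diff_sum_def sum_distrib_left sum.distrib[symmetric]
  proof (intro sum.cong refl, clarify)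
    fix i j :: 'n
    have "x$j - x$i = complex_of_real (\<xi>1$j - \<xi>1$i) + \<i> * complex_of_real (\<xi>2$j - \<xi>2$i)"
      by (simp add: \<xi>1_def \<xi>2_def re_vec_def im_vec_def complex_eq_iff)
    then show "complex_of_real (\<xi>1$j - \<xi>1$i) * (h x - h (swapc i j x)) / (1 - exp (-(x$j - x$i)))
        + \<i> * (complex_of_real (\<xi>2$j - \<xi>2$i) * (h x - h (swapc i j x)) / (1 - exp (-(x$j - x$i))))
      = cher_diff_term h i j x"
      unfolding cher_diff_term_def by (simp add: distrib_right add_divide_distrib)
  qed
  have "cinner lam x * h x = cherD k \<xi>1 h x + \<i> * cherD k \<xi>2 h x"
    unfolding eig lam_x by (simp add: algebra_simps)
  also have "\<dots> = (L (cvec \<xi>1) + \<i> * L (cvec \<xi>2))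
      - (complex_of_real (rho k \<bullet> \<xi>1) + \<i> * complex_of_real (rho k \<bullet> \<xi>2)) * h x
      + k * (S \<xi>1 + \<i> * S \<xi>2)"
    unfolding cherD_eq by (simp add: algebra_simps)
  also have "\<dots> = L x - cinner (cvec (rho k)) x * h x + k * cher_diff_sum h x"
    unfolding L_x rho_x S_x ..
  finally show ?thesis
    by (simp add: cinner_add_left algebra_simps)
qed

section \<open>Positivity of the difference terms\<close>

lemma mult_sin_self_nonneg:
  assumes "\<bar>c\<bar> \<le> pi"
  shows "0 \<le> c * sin c"
proof (cases "c \<ge> 0")
  case True
  then show ?thesis using assms by (simp add: sin_ge_zero)
next
  case False
  then show ?thesis using assms sin_ge_zero[of "-c"] by (simp add: mult_nonpos_nonpos)
qed

text \<open>This is where the width \<open>pi\<close> of the tube enters: the left-hand side is \<open>Re (w coth (w/2))\<close>.\<close>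
lemma Re_mult_exp_ratio_nonneg:
  fixes w :: complex
  assumes "exp w \<noteq> 1" and "\<bar>Im w\<bar> \<le> pi"
  shows "Re (w * (exp w + 1) / (exp w - 1)) \<ge> 0"
proof -
  define a c F where "a = Re w" and "c = Im w" and "F = exp w"
  have "(Re F)^2 + (Im F)^2 = (exp a)^2"
    by (simp add: cmod_power2[symmetric] F_def a_def norm_exp_eq_Re)
  moreover have "0 \<le> 2 * c * Im F"
  proof -
    have "0 \<le> (2 * exp a) * (c * sin c)"
      using mult_sin_self_nonneg assms(2) by (simp add: c_def)
    moreover have "Im F = exp a * sin c"
      by (simp add: F_def a_def c_def Im_exp)
    ultimately show ?thesis
      by (simp add: mult_ac)
  qed
  moreover have "Re (w * (F + 1)) * Re (F - 1) + Im (w * (F + 1)) * Im (F - 1)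
      = a * ((Re F)^2 + (Im F)^2 - 1) + 2 * c * Im F"
    by (simp add: a_def c_def power2_eq_square algebra_simps)
  moreover have "0 \<le> a * ((exp a)^2 - 1)"
    by (cases "a \<ge> 0") (auto intro!: mult_nonpos_nonpos simp: one_le_power power_le_one)
  ultimately have "0 \<le> Re (w * (F + 1)) * Re (F - 1) + Im (w * (F + 1)) * Im (F - 1)"
    by simp
  then show ?thesis
    by (simp add: Re_divide F_def[symmetric] divide_nonneg_nonneg)
qed

lemma inner_mult_self_complex: "((m::complex) * d) \<bullet> d = Re m * (d \<bullet> d)"
  by (simp add: inner_complex_def algebra_simps)

lemma inner_exchange_form_ge:
  fixes m w a b :: complex
  assumes "Re m \<ge> 0"
  shows "((m + w/2) * (a - b)) \<bullet> a - ((m - w/2) * (a - b)) \<bullet> b \<ge> -(cmod w) * (a \<bullet> a + b \<bullet> b)"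
proof -
  define d s where "d = a - b" and "s = a + b"
  have "((m + w/2) * (a - b)) \<bullet> a - ((m - w/2) * (a - b)) \<bullet> b = Re m * (d \<bullet> d) + ((w/2) * d) \<bullet> s"
    unfolding d_def s_def inner_mult_self_complex[symmetric]
    by (simp add: inner_complex_def algebra_simps) (simp add: field_simps)
  moreover have "-(cmod w / 2) * (norm d * norm s) \<le> ((w/2) * d) \<bullet> s"
    using Cauchy_Schwarz_ineq2[of "(w/2) * d" s] by (simp add: norm_mult abs_le_iff)
  moreover have "norm d * norm s \<le> a \<bullet> a + b \<bullet> b"
  proof -
    have "(norm d)^2 + (norm s)^2 = 2 * (a \<bullet> a + b \<bullet> b)"
      unfolding power2_norm_eq_inner d_def s_def by (simp add: inner_simps inner_commute)
    then show ?thesis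
      using sum_squares_bound[of "norm d" "norm s"] by (simp add: power2_eq_square algebra_simps)
  qed
  then have "(cmod w / 2) * (norm d * norm s) \<le> cmod w * (a \<bullet> a + b \<bullet> b)"
    by (intro mult_mono) auto
  moreover have "Re m * (d \<bullet> d) \<ge> 0"
    using assms by simp
  ultimately show ?thesis
    by linarith
qed

lemma exchange_pair_inner_ge:
  fixes w a b :: complex
  assumes "exp w \<noteq> 1" and "\<bar>Im w\<bar> \<le> pi"
  shows "(w * (a - b) / (1 - exp (-w))) \<bullet> a + ((-w) * (b - a) / (1 - exp w)) \<bullet> b
           \<ge> -(cmod w) * (a \<bullet> a + b \<bullet> b)"
proof -
  define m where "m = w * (exp w + 1) / (exp w - 1) / 2"
  have "exp w - 1 \<noteq> 0" "1 - exp w \<noteq> 0"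
    using assms(1) by auto
  then have "w * (a - b) / (1 - exp (-w)) = (m + w/2) * (a - b)"
    and "(-w) * (b - a) / (1 - exp w) = -((m - w/2) * (a - b))"
    by (simp_all add: m_def exp_minus field_simps)
  moreover have "Re m \<ge> 0"
    using Re_mult_exp_ratio_nonneg[OF assms] unfolding m_def Re_divide_numeral by simp
  ultimately show ?thesis
    using inner_exchange_form_ge[of m w a b] by simp
qed

section \<open>Uniqueness\<close>

lemma exp_neq_1_in_strip:
  assumes "\<bar>Im w\<bar> < pi" "w \<noteq> 0"
  shows "exp w \<noteq> 1"
proof
  assume "exp w = 1"
  then obtain n :: int where n: "Re w = 0" "Im w = of_int (2 * n) * pi" by (auto simp: exp_eq_1)
  then have "\<bar>real_of_int (2 * n)\<bar> < 1" using assms(1) by (simp add: abs_mult)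
  then have "n = 0" by linarith
  then show False using n assms(2) by (simp add: complex_eq_iff)
qed

lemma exp_coord_diff_neq_1: "z \<in> Tdom \<Longrightarrow> z$a \<noteq> z$b \<Longrightarrow> exp (z$a - z$b) \<noteq> 1"
  by (rule exp_neq_1_in_strip) (auto simp: mem_Tdom_iff)

definition distinct_coords :: "complex^'n::finite \<Rightarrow> bool" where
  "distinct_coords z \<longleftrightarrow> (\<forall>a b. a \<noteq> b \<longrightarrow> z$a \<noteq> z$b)"

lemma distinct_coords_imp_regular_pt:
  fixes z :: "(complex,'n::{finite,linorder}) vec"
  assumes "z \<in> Tdom" "distinct_coords z"
  shows "regular_pt z"
  unfolding regular_pt_def
proof (intro allI impI)
  fix i j :: 'n assume "i < j"
  then have "z$i \<noteq> z$j" using assms(2) by (auto simp: distinct_coords_def)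
  then have "exp (z$i - z$j) \<noteq> 1" by (rule exp_coord_diff_neq_1[OF assms(1)])
  then show "1 - exp (-(z$j - z$i)) \<noteq> 0" by simp
qed

lemma distinct_coords_scaleC: "distinct_coords v \<Longrightarrow> c \<noteq> 0 \<Longrightarrow> distinct_coords (c *s v)"
  by (simp add: distinct_coords_def)

definition perm_orbit :: "complex^'n::finite \<Rightarrow> (complex^'n) set" where
  "perm_orbit y = (\<lambda>p. \<chi> l. y $ p l) ` {p. p permutes (UNIV :: 'n set)}"

lemma finite_perm_orbit: "finite (perm_orbit y)"
  unfolding perm_orbit_def by (intro finite_imageI finite_permutations) simp

lemma self_in_perm_orbit: "y \<in> perm_orbit y"
  unfolding perm_orbit_def by (rule image_eqI[of _ _ id]) (auto simp: vec_eq_iff)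

lemma swapc_in_perm_orbit:
  assumes "v \<in> perm_orbit y"
  shows "swapc i j v \<in> perm_orbit y"
proof -
  obtain p where p: "p permutes UNIV" "v = (\<chi> l. y $ p l)"
    using assms by (auto simp: perm_orbit_def)
  have "swapc i j v = (\<chi> l. y $ (p \<circ> Transposition.transpose i j) l)"
    by (simp add: p swapc_nth vec_eq_iff)
  moreover have "p \<circ> Transposition.transpose i j permutes UNIV"
    by (intro permutes_compose p permutes_swap_id) auto
  ultimately show ?thesis
    unfolding perm_orbit_def by (intro image_eqI[where x="p \<circ> Transposition.transpose i j"]) auto
qed

lemma sum_perm_orbit_swapc: "(\<Sum>v\<in>perm_orbit y. f (swapc i j v)) = (\<Sum>v\<in>perm_orbit y. f v)"
  by (rule sum.reindex_bij_witness[of _ "swapc i j" "swapc i j"]) (auto intro: swapc_in_perm_orbit)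

lemma perm_orbit_in_Tdom: "y \<in> Tdom \<Longrightarrow> v \<in> perm_orbit y \<Longrightarrow> v \<in> Tdom"
  by (auto simp: perm_orbit_def mem_Tdom_iff)

lemma perm_orbit_distinct_coords: "distinct_coords y \<Longrightarrow> v \<in> perm_orbit y \<Longrightarrow> distinct_coords v"
  unfolding perm_orbit_def distinct_coords_def by (auto dest: permutes_inj simp: inj_eq)

lemma perm_orbit_nth_le: "v \<in> perm_orbit y \<Longrightarrow> cmod (v$a) \<le> (\<Sum>l\<in>UNIV. cmod (y$l))"
  by (auto simp: perm_orbit_def intro!: member_le_sum)

lemma scaleC_perm_orbit_in_Tdom:
  "y \<in> Tdom \<Longrightarrow> v \<in> perm_orbit y \<Longrightarrow> 0 \<le> t \<Longrightarrow> t \<le> 1 \<Longrightarrow> complex_of_real t *s v \<in> Tdom"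
  using scaleC_in_Tdom perm_orbit_in_Tdom by blast

lemma scaleC_perm_orbit_distinct_coords:
  "distinct_coords y \<Longrightarrow> v \<in> perm_orbit y \<Longrightarrow> t \<noteq> 0 \<Longrightarrow> distinct_coords (complex_of_real t *s v)"
  by (auto intro: distinct_coords_scaleC perm_orbit_distinct_coords)

lemma swapc_scaleC: "swapc i j (c *s v) = c *s swapc i j v"
  by (simp add: vec_eq_iff swapc_nth)

lemma cher_diff_term_swapc:
  "cher_diff_term u i j (swapc i j x) = (-(x$j - x$i)) * (u (swapc i j x) - u x) / (1 - exp (x$j - x$i))"
  by (simp add: cher_diff_term_def swapc_nth)

lemma cmod_coord_diff_perm_orbit_le:
  assumes "v \<in> perm_orbit y" "0 \<le> t"
  shows "cmod ((complex_of_real t *s v)$j - (complex_of_real t *s v)$i) \<le> 2 * t * (\<Sum>l\<in>UNIV. cmod (y$l))"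
proof -
  have "cmod ((complex_of_real t *s v)$j - (complex_of_real t *s v)$i) = t * cmod (v$j - v$i)"
    using assms(2) by (simp add: right_diff_distrib[symmetric] norm_mult)
  also have "cmod (v$j - v$i) \<le> cmod (v$j) + cmod (v$i)" by (rule norm_triangle_ineq4)
  also have "\<dots> \<le> 2 * (\<Sum>l\<in>UNIV. cmod (y$l))"
    using perm_orbit_nth_le[OF assms(1), of j] perm_orbit_nth_le[OF assms(1), of i] by simp
  finally show ?thesis using assms(2) by (simp add: mult_left_mono)
qed

lemma cher_diff_term_pair_ge:
  assumes x: "x \<in> Tdom" "distinct_coords x" and ij: "i \<noteq> j"
  shows "cher_diff_term u i j x \<bullet> u x + cher_diff_term u i j (swapc i j x) \<bullet> u (swapc i j x)
    \<ge> -(cmod (x$j - x$i)) * (u x \<bullet> u x + u (swapc i j x) \<bullet> u (swapc i j x))"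
proof -
  have "exp (x$j - x$i) \<noteq> 1"
    using exp_coord_diff_neq_1[OF x(1)] x(2) ij by (simp add: distinct_coords_def)
  moreover have "\<bar>Im (x$j - x$i)\<bar> \<le> pi"
    using x(1) by (simp add: mem_Tdom_iff less_imp_le)
  ultimately show ?thesis
    using exchange_pair_inner_ge[of "x$j - x$i" "u x" "u (swapc i j x)"]
    unfolding cher_diff_term_swapc by (simp add: cher_diff_term_def)
qed

text \<open>Pairing each \<open>v\<close> with \<open>s\<^sub>i\<^sub>j v\<close> reduces the sum to the pairs of \<open>cher_diff_term_pair_ge\<close>.\<close>
lemma sum_perm_orbit_cher_diff_term_ge:
  fixes u :: "(complex,'n::finite) vec \<Rightarrow> complex"
  assumes t: "0 < t" "t \<le> 1" and y: "y \<in> Tdom" "distinct_coords y" and ij: "i \<noteq> j"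
  shows "(\<Sum>v\<in>perm_orbit y. cher_diff_term u i j (complex_of_real t *s v) \<bullet> u (complex_of_real t *s v))
     \<ge> -(2 * t * (\<Sum>l\<in>UNIV. cmod (y$l)))
          * (\<Sum>v\<in>perm_orbit y. u (complex_of_real t *s v) \<bullet> u (complex_of_real t *s v))"
proof -
  define M where "M = (\<Sum>l\<in>UNIV. cmod (y$l))"
  define X where "X v = complex_of_real t *s v" for v :: "(complex,'n) vec"
  define T where "T v = cher_diff_term u i j (X v) \<bullet> u (X v)" for v
  define Q where "Q v = u (X v) \<bullet> u (X v)" for v
  have pair: "T v + T (swapc i j v) \<ge> -(2 * t * M) * (Q v + Q (swapc i j v))"
    if v: "v \<in> perm_orbit y" for v
  proof -
    have "X v \<in> Tdom" "distinct_coords (X v)"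
      using scaleC_perm_orbit_in_Tdom[OF y(1) v] scaleC_perm_orbit_distinct_coords[OF y(2) v] t
      by (simp_all add: X_def)
    from cher_diff_term_pair_ge[OF this ij, of u]
    have "T v + T (swapc i j v) \<ge> -(cmod (X v $ j - X v $ i)) * (Q v + Q (swapc i j v))"
      by (simp add: T_def Q_def X_def swapc_scaleC)
    moreover have "cmod (X v $ j - X v $ i) \<le> 2 * t * M"
      unfolding X_def M_def using cmod_coord_diff_perm_orbit_le[OF v] t by simp
    then have "-(2 * t * M) * (Q v + Q (swapc i j v)) \<le> -(cmod (X v $ j - X v $ i)) * (Q v + Q (swapc i j v))"
      by (intro mult_right_mono) (auto simp: Q_def)
    ultimately show ?thesis by linarith
  qed
  have "2 * (\<Sum>v\<in>perm_orbit y. T v) = (\<Sum>v\<in>perm_orbit y. T v + T (swapc i j v))"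
    by (simp add: sum.distrib sum_perm_orbit_swapc[where f=T])
  also have "\<dots> \<ge> (\<Sum>v\<in>perm_orbit y. -(2 * t * M) * (Q v + Q (swapc i j v)))"
    by (rule sum_mono) (rule pair)
  also have "(\<Sum>v\<in>perm_orbit y. -(2 * t * M) * (Q v + Q (swapc i j v)))
      = -(2 * t * M) * (\<Sum>v\<in>perm_orbit y. Q v + Q (swapc i j v))"
    by (rule sum_distrib_left[symmetric])
  also have "(\<Sum>v\<in>perm_orbit y. Q v + Q (swapc i j v)) = 2 * (\<Sum>v\<in>perm_orbit y. Q v)"
    by (simp add: sum.distrib sum_perm_orbit_swapc[where f=Q])
  finally show ?thesis
    by (simp add: T_def Q_def X_def M_def)
qed

lemma sum_perm_orbit_cher_diff_sum_ge:
  fixes u :: "(complex,'n::{finite,linorder}) vec \<Rightarrow> complex"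
  assumes "0 < t" "t \<le> 1" "y \<in> Tdom" "distinct_coords y"
  shows "(\<Sum>v\<in>perm_orbit y. cher_diff_sum u (complex_of_real t *s v) \<bullet> u (complex_of_real t *s v))
     \<ge> -(card {(i,j). i < (j::'n)} * (2 * t * (\<Sum>l\<in>UNIV. cmod (y$l))))
          * (\<Sum>v\<in>perm_orbit y. u (complex_of_real t *s v) \<bullet> u (complex_of_real t *s v))"
proof -
  have "(\<Sum>v\<in>perm_orbit y. cher_diff_sum u (complex_of_real t *s v) \<bullet> u (complex_of_real t *s v))
      = (\<Sum>(i,j)\<in>{(i,j). i < (j::'n)}. \<Sum>v\<in>perm_orbit y.
           cher_diff_term u i j (complex_of_real t *s v) \<bullet> u (complex_of_real t *s v))"
    unfolding cher_diff_sum_def inner_sum_left by (subst sum.swap) (simp add: case_prod_unfold)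
  also have "\<dots> \<ge> (\<Sum>(i,j)\<in>{(i,j). i < (j::'n)}. -(2 * t * (\<Sum>l\<in>UNIV. cmod (y$l)))
          * (\<Sum>v\<in>perm_orbit y. u (complex_of_real t *s v) \<bullet> u (complex_of_real t *s v)))"
    using sum_perm_orbit_cher_diff_term_ge[OF assms] by (intro sum_mono) auto
  finally show ?thesis
    by (simp add: case_prod_unfold)
qed

lemma cmod_cinner_perm_orbit_le:
  assumes "v \<in> perm_orbit y" "0 \<le> t"
  shows "cmod (cinner c (complex_of_real t *s v)) \<le> t * ((\<Sum>i\<in>UNIV. cmod (c$i)) * (\<Sum>l\<in>UNIV. cmod (y$l)))"
proof -
  have "cmod (cinner c (complex_of_real t *s v)) \<le> (\<Sum>i\<in>UNIV. cmod (c$i) * (t * cmod (v$i)))"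
    unfolding cinner_def using assms(2) by (rule_tac order_trans[OF norm_sum]) (simp add: norm_mult)
  also have "\<dots> \<le> (\<Sum>i\<in>UNIV. cmod (c$i) * (t * (\<Sum>l\<in>UNIV. cmod (y$l))))"
    using perm_orbit_nth_le[OF assms(1)] assms(2) by (intro sum_mono mult_left_mono) auto
  also have "\<dots> = t * ((\<Sum>i\<in>UNIV. cmod (c$i)) * (\<Sum>l\<in>UNIV. cmod (y$l)))"
    by (simp only: sum_distrib_right[symmetric]) (simp add: algebra_simps)
  finally show ?thesis .
qed

lemma inner_mult_le_cmod: "((c::complex) * a) \<bullet> a \<le> cmod c * (a \<bullet> a)"
  unfolding inner_mult_self_complex by (intro mult_right_mono complex_Re_le_cmod) simp

lemma sum_perm_orbit_cinner_mult_le: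
  fixes g :: "(complex,'n::finite) vec \<Rightarrow> complex"
  assumes "0 \<le> t"
  shows "(\<Sum>v\<in>perm_orbit y. (cinner c (complex_of_real t *s v) * g v) \<bullet> g v)
    \<le> t * ((\<Sum>i\<in>UNIV. cmod (c$i)) * (\<Sum>l\<in>UNIV. cmod (y$l))) * (\<Sum>v\<in>perm_orbit y. g v \<bullet> g v)"
proof -
  define K where "K = t * ((\<Sum>i\<in>UNIV. cmod (c$i)) * (\<Sum>l\<in>UNIV. cmod (y$l)))"
  have "(cinner c (complex_of_real t *s v) * g v) \<bullet> g v \<le> K * (g v \<bullet> g v)" if "v \<in> perm_orbit y" for v
    using cmod_cinner_perm_orbit_le[OF that assms, of c] unfolding K_def[symmetric]
    by (meson inner_mult_le_cmod order_trans mult_right_mono inner_ge_zero)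
  then have "(\<Sum>v\<in>perm_orbit y. (cinner c (complex_of_real t *s v) * g v) \<bullet> g v)
      \<le> (\<Sum>v\<in>perm_orbit y. K * (g v \<bullet> g v))"
    by (rule sum_mono)
  then show ?thesis
    unfolding K_def[symmetric] by (simp add: sum_distrib_left)
qed

lemma gronwall_le_exp:
  fixes N D :: "real \<Rightarrow> real"
  assumes "a \<le> b"
    and N: "\<And>t. t \<in> {a..b} \<Longrightarrow> (N has_real_derivative D t) (at t)"
    and D: "\<And>t. t \<in> {a<..<b} \<Longrightarrow> D t \<le> C * N t"
  shows "N b \<le> exp (C * (b - a)) * N a"
proof -
  define g where "g t = exp (- C * t) * N t" for t
  have g: "(g has_real_derivative exp (- C * t) * (D t - C * N t)) (at t)" if "t \<in> {a..b}" for t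
    unfolding g_def
    by (rule derivative_eq_intros DERIV_mult N[OF that] | simp add: algebra_simps)+
  have "g b \<le> g a"
  proof (rule DERIV_nonpos_imp_decreasing_open[OF \<open>a \<le> b\<close>])
    fix t assume "a < t" "t < b"
    with g[of t] D[of t] show "\<exists>y. (g has_real_derivative y) (at t) \<and> y \<le> 0"
      by (auto intro!: mult_nonneg_nonpos)
  next
    show "continuous_on {a..b} g"
      using g by (meson DERIV_isCont continuous_at_imp_continuous_on)
  qed
  moreover have "exp (C * b) * g b = N b"
    by (simp add: g_def mult.assoc[symmetric] exp_add[symmetric])
  moreover have "exp (C * b) * g a = exp (C * (b - a)) * N a"
    by (simp add: g_def mult.assoc[symmetric] exp_add[symmetric] right_diff_distrib)
  ultimately show ?thesis
    by (metis exp_gt_zero mult_le_cancel_left_pos)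
qed

lemma eventually_distinct_coords:
  fixes y :: "(complex,'n::{finite,linorder}) vec"
  shows "\<forall>\<^sub>F e in at (0::real). distinct_coords (y + complex_of_real e *s (\<chi> l. of_nat (cidx l)))"
proof -
  define r :: "(complex,'n) vec" where "r = (\<chi> l. of_nat (cidx l))"
  have "\<forall>\<^sub>F e in at (0::real). a \<noteq> b \<longrightarrow>
      (y + complex_of_real e *s r)$a \<noteq> (y + complex_of_real e *s r)$b" for a b :: 'n
  proof (cases "a = b")
    case False
    then have "real (cidx a) \<noteq> real (cidx b)"
      using inj_cidx by (auto dest: injD)
    then have "e = Re (y$b - y$a) / (real (cidx a) - real (cidx b))"
      if "(y + complex_of_real e *s r)$a = (y + complex_of_real e *s r)$b" for e
      using arg_cong[OF that, of Re] by (simp add: r_def field_simps)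
    then show ?thesis
      using eventually_neq_at_within[of "Re (y$b - y$a) / (real (cidx a) - real (cidx b))" 0 UNIV]
      by (auto elim: eventually_mono)
  qed simp
  then have "\<forall>\<^sub>F e in at (0::real). \<forall>a b. a \<noteq> b \<longrightarrow>
      (y + complex_of_real e *s r)$a \<noteq> (y + complex_of_real e *s r)$b"
    by (intro eventually_all_finite)
  then show ?thesis
    unfolding r_def distinct_coords_def .
qed

lemma linear_of_real_scaleC: "linear (\<lambda>s::real. complex_of_real s *s (v :: (complex,'n::finite) vec))"
  by (rule linearI) (simp_all add: vec_eq_iff algebra_simps scaleR_conv_of_real[where 'a=complex])

lemma inner_of_real_mult_left: "(complex_of_real r * a) \<bullet> b = r * (a \<bullet> b)"
  by (simp add: scaleR_conv_of_real[symmetric])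

lemma has_real_derivative_inner_self_ray:
  fixes u :: "(complex,'n::finite) vec \<Rightarrow> complex"
  assumes "(u has_derivative L) (at (complex_of_real t *s v))" and hom: "\<And>c w. L (c *s w) = c * L w"
  shows "((\<lambda>s. u (complex_of_real s *s v) \<bullet> u (complex_of_real s *s v)) has_real_derivative
           2 * (L v \<bullet> u (complex_of_real t *s v))) (at t)"
proof -
  have "((\<lambda>s::real. complex_of_real s *s v) has_derivative (\<lambda>s. complex_of_real s *s v)) (at t)"
    using linear_of_real_scaleC[of v] linear_conv_bounded_linear bounded_linear_imp_has_derivative by blast
  from has_derivative_compose[OF this assms(1)]
  have ray: "((\<lambda>s. u (complex_of_real s *s v)) has_derivative (\<lambda>h. complex_of_real h * L v)) (at t)"
    by (simp add: hom)
  moreover have "(\<lambda>h. u (complex_of_real t *s v) \<bullet> (complex_of_real h * L v)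
        + (complex_of_real h * L v) \<bullet> u (complex_of_real t *s v))
      = (*) (2 * (L v \<bullet> u (complex_of_real t *s v)))"
    by (auto simp: fun_eq_iff scaleR_conv_of_real[symmetric] inner_commute)
  ultimately show ?thesis
    using has_derivative_inner[OF ray ray] by (simp add: has_field_derivative_def)
qed

locale cherednik_eigenfunction =
  fixes k :: real and lam :: "(complex,'n::{finite,linorder}) vec" and u :: "(complex,'n) vec \<Rightarrow> complex"
  assumes k_nonneg: "0 \<le> k"
    and holo: "holo_on Tdom u"
    and eigen: "\<And>\<xi> x. x \<in> Tdom \<Longrightarrow> regular_pt x \<Longrightarrow> cherD k \<xi> u x = cinner lam (cvec \<xi>) * u x"
begin

definition Du :: "(complex,'n) vec \<Rightarrow> (complex,'n) vec \<Rightarrow> complex" where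
  "Du x = (SOME L. (u has_derivative L) (at x) \<and> (\<forall>c v. L (c *s v) = c * L v))"

lemma has_derivative_Du: "x \<in> Tdom \<Longrightarrow> (u has_derivative Du x) (at x)"
  and Du_scaleC: "x \<in> Tdom \<Longrightarrow> Du x (c *s v) = c * Du x v"
  using someI_ex[OF holo_on_open_has_derivative[OF holo open_Tdom]] unfolding Du_def by blast+

lemma Du_euler:
  assumes "x \<in> Tdom" "regular_pt x"
  shows "Du x x = cinner (lam + cvec (rho k)) x * u x - k * cher_diff_sum u x"
  using cherD_euler_identity[OF has_derivative_Du Du_scaleC] eigen assms by blast

text \<open>The difference terms couple \<open>u x\<close> with \<open>u (swapc i j x)\<close>, so the energy is summed over
  the permutation orbit, which is closed under all transpositions.\<close>
definition orbit_energy :: "(complex,'n) vec \<Rightarrow> real \<Rightarrow> real" where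
  "orbit_energy y t = (\<Sum>v\<in>perm_orbit y. u (complex_of_real t *s v) \<bullet> u (complex_of_real t *s v))"

definition orbit_energy_deriv :: "(complex,'n) vec \<Rightarrow> real \<Rightarrow> real" where
  "orbit_energy_deriv y t =
     (\<Sum>v\<in>perm_orbit y. 2 * (Du (complex_of_real t *s v) v \<bullet> u (complex_of_real t *s v)))"

lemma has_real_derivative_orbit_energy:
  assumes "y \<in> Tdom" "t \<in> {0..1}"
  shows "(orbit_energy y has_real_derivative orbit_energy_deriv y t) (at t)"
  unfolding orbit_energy_def[abs_def] orbit_energy_deriv_def
proof (rule DERIV_sum)
  fix v assume "v \<in> perm_orbit y"
  with assms have "complex_of_real t *s v \<in> Tdom"
    by (auto intro: scaleC_perm_orbit_in_Tdom)
  then show "((\<lambda>s. u (complex_of_real s *s v) \<bullet> u (complex_of_real s *s v)) has_real_derivative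
      2 * (Du (complex_of_real t *s v) v \<bullet> u (complex_of_real t *s v))) (at t)"
    by (intro has_real_derivative_inner_self_ray has_derivative_Du Du_scaleC)
qed

lemma Du_scaled_inner:
  assumes "x = complex_of_real t *s v" "x \<in> Tdom" "regular_pt x"
  shows "t * (Du x v \<bullet> u x) = (cinner (lam + cvec (rho k)) x * u x) \<bullet> u x - k * (cher_diff_sum u x \<bullet> u x)"
proof -
  have "t * (Du x v \<bullet> u x) = (complex_of_real t * Du x v) \<bullet> u x"
    by (simp add: inner_of_real_mult_left)
  also have "complex_of_real t * Du x v = Du x x"
    using Du_scaleC[OF assms(2)] assms(1) by simp
  also have "\<dots> = cinner (lam + cvec (rho k)) x * u x - k * cher_diff_sum u x"
    by (rule Du_euler[OF assms(2,3)])
  finally show ?thesis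
    by (simp add: inner_diff_left inner_of_real_mult_left)
qed

lemma orbit_energy_deriv_le:
  assumes y: "y \<in> Tdom" "distinct_coords y"
  obtains C where "\<And>t. 0 < t \<Longrightarrow> t < 1 \<Longrightarrow> orbit_energy_deriv y t \<le> C * orbit_energy y t"
proof -
  define c where "c = lam + cvec (rho k)"
  define M where "M = (\<Sum>l\<in>UNIV. cmod (y$l))"
  define B where "B = (\<Sum>i\<in>UNIV. cmod (c$i)) * M"
  define P where "P = real (card {(i,j). i < (j::'n)})"
  have "orbit_energy_deriv y t \<le> (2 * B + 4 * k * P * M) * orbit_energy y t" if t: "0 < t" "t < 1" for t
  proof -
    define X where "X v = complex_of_real t *s v" for v :: "(complex,'n) vec"
    define S1 where "S1 = (\<Sum>v\<in>perm_orbit y. (cinner c (X v) * u (X v)) \<bullet> u (X v))"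
    define S2 where "S2 = (\<Sum>v\<in>perm_orbit y. cher_diff_sum u (X v) \<bullet> u (X v))"
    have "t * (2 * (Du (X v) v \<bullet> u (X v)))
        = 2 * ((cinner c (X v) * u (X v)) \<bullet> u (X v)) - 2 * k * (cher_diff_sum u (X v) \<bullet> u (X v))"
      if v: "v \<in> perm_orbit y" for v
    proof -
      have "X v \<in> Tdom"
        using scaleC_perm_orbit_in_Tdom[OF y(1) v] t by (simp add: X_def)
      moreover have "regular_pt (X v)"
        using scaleC_perm_orbit_distinct_coords[OF y(2) v] t
        by (intro distinct_coords_imp_regular_pt[OF \<open>X v \<in> Tdom\<close>]) (simp add: X_def)
      ultimately show ?thesis
        using arg_cong[OF Du_scaled_inner[OF X_def], where f="\<lambda>z. 2 * z"] by (simp add: c_def algebra_simps)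
    qed
    then have "t * orbit_energy_deriv y t = 2 * S1 - 2 * k * S2"
      unfolding orbit_energy_deriv_def S1_def S2_def X_def[symmetric] sum_distrib_left
      by (simp add: sum_subtractf sum_distrib_left)
    moreover have "S1 \<le> t * B * orbit_energy y t"
      using sum_perm_orbit_cinner_mult_le[where t=t and y=y and c=c and g="\<lambda>v. u (X v)"] t
      unfolding S1_def orbit_energy_def B_def M_def X_def by simp
    moreover have "S2 \<ge> -(P * (2 * t * M)) * orbit_energy y t"
      using sum_perm_orbit_cher_diff_sum_ge[of t y u] t y
      unfolding S2_def orbit_energy_def X_def P_def M_def by simp
    then have "k * S2 \<ge> -(k * P * (2 * t * M)) * orbit_energy y t"
      using mult_left_mono[OF _ k_nonneg] by (metis mult.assoc mult_minus_left mult_minus_right)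
    ultimately have "t * orbit_energy_deriv y t \<le> t * ((2 * B + 4 * k * P * M) * orbit_energy y t)"
      by (simp add: algebra_simps)
    then show ?thesis
      using t by simp
  qed
  then show ?thesis
    using that by blast
qed

lemma vanishes_at_distinct_coords:
  assumes u0: "u 0 = 0" and y: "y \<in> Tdom" "distinct_coords y"
  shows "u y = 0"
proof -
  obtain C where C: "\<And>t. 0 < t \<Longrightarrow> t < 1 \<Longrightarrow> orbit_energy_deriv y t \<le> C * orbit_energy y t"
    using orbit_energy_deriv_le[OF y] by blast
  have "orbit_energy y 1 \<le> exp (C * (1 - 0)) * orbit_energy y 0"
    by (rule gronwall_le_exp[where D="orbit_energy_deriv y"])
      (auto intro: has_real_derivative_orbit_energy[OF y(1)] C)
  also have "orbit_energy y 0 = 0"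
    by (simp add: orbit_energy_def u0)
  finally have "orbit_energy y 1 \<le> 0"
    by simp
  moreover have "u y \<bullet> u y \<le> (\<Sum>v\<in>perm_orbit y. u v \<bullet> u v)"
    by (rule member_le_sum) (simp_all add: self_in_perm_orbit finite_perm_orbit)
  then have "u y \<bullet> u y \<le> orbit_energy y 1"
    by (simp add: orbit_energy_def)
  ultimately have "u y \<bullet> u y \<le> 0"
    by linarith
  then show ?thesis
    by (metis inner_eq_zero_iff inner_ge_zero order_antisym)
qed

lemma vanishes:
  assumes u0: "u 0 = 0" and x: "x \<in> Tdom"
  shows "u x = 0"
proof -
  define r :: "(complex,'n) vec" where "r = (\<chi> l. of_nat (cidx l))"
  have "isCont (\<lambda>e::real. x + complex_of_real e *s r) 0"
    using linear_of_real_scaleC[of r]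
    by (intro continuous_intros linear_continuous_at) (simp add: linear_conv_bounded_linear)
  moreover have "isCont u ((\<lambda>e::real. x + complex_of_real e *s r) 0)"
    using has_derivative_continuous[OF has_derivative_Du[OF x]] by simp
  ultimately have "isCont (\<lambda>e::real. u (x + complex_of_real e *s r)) 0"
    by (rule isCont_o2)
  then have "((\<lambda>e::real. u (x + complex_of_real e *s r)) \<longlongrightarrow> u x) (at 0)"
    by (simp add: isCont_def)
  moreover have "\<forall>\<^sub>F e in at (0::real). u (x + complex_of_real e *s r) = 0"
    using eventually_distinct_coords[of x, folded r_def]
  proof (rule eventually_mono)
    fix e :: real
    have "x + complex_of_real e *s r \<in> Tdom"
      using x by (simp add: mem_Tdom_iff r_def)
    then show "distinct_coords (x + complex_of_real e *s r) \<Longrightarrow> u (x + complex_of_real e *s r) = 0"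
      using vanishes_at_distinct_coords[OF u0] by blast
  qed
  then have "((\<lambda>e::real. u (x + complex_of_real e *s r)) \<longlongrightarrow> 0) (at 0)"
    by (rule tendsto_eventually)
  ultimately show ?thesis
    by (rule LIM_unique)
qed

end

lemma cherD_eigenfunction_unique:
  fixes f g :: "(complex,'n::{finite,linorder}) vec \<Rightarrow> complex"
  assumes "0 \<le> k" and holo: "holo_on Tdom f" "holo_on Tdom g"
    and eigen: "\<And>\<xi> y. y \<in> Tdom \<Longrightarrow> regular_pt y \<Longrightarrow> cherD k \<xi> f y = cinner lam (cvec \<xi>) * f y"
      "\<And>\<xi> y. y \<in> Tdom \<Longrightarrow> regular_pt y \<Longrightarrow> cherD k \<xi> g y = cinner lam (cvec \<xi>) * g y"
    and "f 0 = g 0" "x \<in> Tdom"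
  shows "f x = g x"
proof -
  interpret cherednik_eigenfunction k lam "\<lambda>z. f z - g z"
  proof
    show "0 \<le> k" by (rule assms(1))
    show "holo_on Tdom (\<lambda>z. f z - g z)"
      by (rule holo_on_diff[OF holo])
    fix \<xi> and y :: "(complex,'n) vec"
    assume "y \<in> Tdom" "regular_pt y"
    then show "cherD k \<xi> (\<lambda>z. f z - g z) y = cinner lam (cvec \<xi>) * (f y - g y)"
      using cherD_diff[OF holo] eigen by (simp add: right_diff_distrib)
  qed
  show ?thesis
    using vanishes assms(6,7) by simp
qed

theorem proposition2p3:
  fixes k :: real and G0 :: "(complex,'n::{finite,linorder}) vec \<Rightarrow> (complex,'n) vec \<Rightarrow> complex"
    and lam :: "(complex,'n) vec"
  assumes "k \<ge> 0"
    and "G0_props k G0"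
    and "\<forall>H. G0_props k H \<longrightarrow> (\<forall>l\<in>C0. \<forall>z\<in>T0. H l z = G0 l z)"
  shows "holo_on Tdom (Gext G0 lam)
    \<and> (\<forall>\<xi>::(real,'n) vec. \<forall>x\<in>Tdom. regular_pt x \<longrightarrow>
          cherD k \<xi> (Gext G0 lam) x = cinner lam (cvec \<xi>) * Gext G0 lam x)
    \<and> Gext G0 lam 0 = 1
    \<and> (\<forall>f. holo_on Tdom f
          \<and> (\<forall>\<xi>::(real,'n) vec. \<forall>x\<in>Tdom. regular_pt x \<longrightarrow> cherD k \<xi> f x = cinner lam (cvec \<xi>) * f x)
          \<and> f 0 = 1
          \<longrightarrow> (\<forall>x\<in>Tdom. f x = Gext G0 lam x))"
proof -
  have holo: "holo_on Tdom (Gext G0 lam)"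
    using assms(2) unfolding G0_props_def by (blast intro: holo_on_Gext)
  have eigen: "\<forall>\<xi>. \<forall>x\<in>Tdom. regular_pt x \<longrightarrow>
      cherD k \<xi> (Gext G0 lam) x = cinner lam (cvec \<xi>) * Gext G0 lam x"
    using cherD_Gext_eigen[OF assms(2)] by blast
  have at_0: "Gext G0 lam 0 = 1"
    using assms(2) proj0_in_C0[of lam] by (simp add: G0_props_def Gext_eq diag_pairing_def cinner_def proj0_def)
  have "f x = Gext G0 lam x"
    if "holo_on Tdom f" "\<forall>\<xi>. \<forall>x\<in>Tdom. regular_pt x \<longrightarrow> cherD k \<xi> f x = cinner lam (cvec \<xi>) * f x"
      "f 0 = 1" "x \<in> Tdom" for f x
    by (rule cherD_eigenfunction_unique[OF assms(1) that(1) holo, where lam=lam])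
      (use that eigen at_0 in auto)
  with holo eigen at_0 show ?thesis
    by blast
qed

end
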